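(* For every nonnegative integer $r$, $$\sum_{n=1}^{\infty}\frac{1}{(2n+2r+3)(n+1)(2n+1)(2n+3)}\frac{\binom{2n}{n}}{\binom{2n+2r+2}{n+r+1}}=\frac{1}{2^{2r+1}}\left(\frac{3}{8(r+1)}+\frac{4\wp(2r+2)+2\wp(2r)}{8}\right)-\frac{1}{3(2r+3)\binom{2r+2}{r+1}}-\frac{1}{2(2r+1)\binom{2r}{r}},$$ where $\wp(q)=\int_0^{\pi/2} z\sin^q z\,\mathrm{d}z$. *)

theory Defs
  imports "HOL-Analysis.Analysis"
begin

definition wp :: "nat \<Rightarrow> real" where
  "wp q = integral {0..pi/2} (\<lambda>z. z * sin z ^ q)"

end

theory Submission
  imports Defs "HOL-Real_Asymp.Real_Asymp"
begin

(* Write S(r) for the series and T(r, n) for its terms.  T is hypergeometric in n and in r, and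
   creative telescoping in r yields T(r+1, n) = a(r) T(r, n) + G(r, n+1) - G(r, n) with
   G(r, n) = R(r, n) T(r, n) for an explicit rational function R.  Summing over n >= 1 gives
   S(r+1) = a(r) S(r) + lim G(r, -) - G(r, 1).  The closed form satisfies the same recurrence,
   and so does each of its two parts separately: the wp part, by the reduction formula
   (q + 2) wp (q + 2) = (q + 1) wp q + 1 / (q + 2), absorbs the limit term, and the binomial part
   absorbs G(r, 1).  For r = 0 the terms are partial fractions and the value comes from
   sum 1 / (2n + 1)^2 = pi^2 / 8. *)

definition central_binom :: "nat \<Rightarrow> real" where
  "central_binom k = real ((2 * k) choose k)"

lemma central_binom_pos: "central_binom k > 0"
  by (simp add: central_binom_def)

lemma Suc_times_central_binomial:
  "Suc k * ((2 * Suc k) choose Suc k) = 2 * (2 * k + 1) * ((2 * k) choose k)"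
  by (metis Suc_eq_plus1 Suc_times_binomial Suc_times_binomial_add add_2_eq_Suc
      add_mult_distrib mult_Suc_right nat_mult_1 one_add_one)

lemma central_binom_Suc:
  "central_binom (Suc k) = 2 * (2 * real k + 1) / (real k + 1) * central_binom k"
proof -
  have "real (Suc k) * central_binom (Suc k) = 2 * (2 * real k + 1) * central_binom k"
    unfolding central_binom_def of_nat_mult[symmetric] Suc_times_central_binomial
    by (simp add: algebra_simps)
  then show ?thesis
    by (simp add: field_simps)
qed

lemma central_binom_ratio_tendsto:
  "(\<lambda>n. central_binom n / central_binom (n + k)) \<longlonglongrightarrow> 1 / 4 ^ k"
proof (induction k)
  case 0
  show ?case
    using central_binom_pos by (simp add: less_imp_neq[symmetric])
next
  case (Suc k)
  have "(\<lambda>n. (real (n + k) + 1) / (2 * (2 * real (n + k) + 1))) \<longlonglongrightarrow> 1 / 4"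
    by real_asymp
  from tendsto_mult[OF Suc this]
  have "(\<lambda>n. central_binom n / central_binom (n + k)
      * ((real (n + k) + 1) / (2 * (2 * real (n + k) + 1)))) \<longlonglongrightarrow> 1 / 4 ^ Suc k"
    by (simp only: power_Suc2) simp
  moreover have "central_binom n / central_binom (n + k)
      * ((real (n + k) + 1) / (2 * (2 * real (n + k) + 1))) = central_binom n / central_binom (n + Suc k)"
    for n
    using central_binom_pos[of "n + k"] by (simp add: central_binom_Suc field_simps)
  ultimately show ?case
    by (simp only:)
qed

lemma wp_has_integral: "((\<lambda>z. z * sin z ^ q) has_integral wp q) {0..pi/2}"
  unfolding wp_def
  by (intro integrable_integral integrable_continuous_interval continuous_intros)

lemma wp_0: "wp 0 = pi\<^sup>2 / 8"
  using ident_has_integral[of 0 "pi/2"] by (simp add: wp_def integral_unique power_divide)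

lemma wp_Suc_Suc: "wp (Suc (Suc q)) = ((real q + 1) * wp q + 1 / (real q + 2)) / (real q + 2)"
proof -
  define F where "F z = sin z ^ Suc (Suc q) / (real q + 2) - z * sin z ^ Suc q * cos z" for z
  define f where "f z = z * ((real q + 2) * sin z ^ Suc (Suc q) - (real q + 1) * sin z ^ q)" for z
  have "(F has_real_derivative f x) (at x)" for x
  proof -
    have cos_sq: "cos x * (cos x * z) = z - sin x * (sin x * z)" for z
      using sin_cos_squared_add[of x] unfolding power2_eq_square by algebra
    show ?thesis
      unfolding F_def
      by (rule derivative_eq_intros refl | simp)+ (simp add: f_def field_simps cos_sq)
  qed
  then have "(f has_integral (F (pi/2) - F 0)) {0..pi/2}"
    by (intro fundamental_theorem_of_calculus)
      (auto simp: has_real_derivative_iff_has_vector_derivative has_vector_derivative_at_within)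
  moreover have "F (pi/2) - F 0 = 1 / (real q + 2)"
    by (simp add: F_def)
  moreover have "(f has_integral (real q + 2) * wp (Suc (Suc q)) - (real q + 1) * wp q) {0..pi/2}"
    unfolding f_def right_diff_distrib mult.left_commute[of _ "real q + _"]
    by (intro has_integral_diff has_integral_mult_right wp_has_integral)
  ultimately have "(real q + 2) * wp (Suc (Suc q)) - (real q + 1) * wp q = 1 / (real q + 2)"
    by (metis has_integral_unique)
  then have "wp (Suc (Suc q)) * (real q + 2) = (real q + 1) * wp q + 1 / (real q + 2)"
    by (simp add: algebra_simps)
  then show ?thesis
    by (simp add: eq_divide_eq)
qed

lemma sums_inverse_odd_squares: "(\<lambda>n. 1 / (2 * real n + 1)\<^sup>2) sums (pi\<^sup>2 / 8)"
proof -
  have "(\<lambda>n. \<Sum>k\<in>{n * 2..<n * 2 + 2}. 1 / real ((k + 1)\<^sup>2)) sums (pi\<^sup>2 / 6)"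
    by (rule sums_group[OF inverse_squares_sums]) simp
  moreover have "(\<Sum>k\<in>{n * 2..<n * 2 + 2}. 1 / real ((k + 1)\<^sup>2))
      = 1 / (2 * real n + 1)\<^sup>2 + 1 / 4 * (1 / real ((n + 1)\<^sup>2))" for n
  proof -
    have "{n * 2..<n * 2 + 2} = {2 * n, 2 * n + 1}"
      by auto
    then show ?thesis
      by (simp add: field_simps power2_eq_square)
  qed
  ultimately have "(\<lambda>n. 1 / (2 * real n + 1)\<^sup>2 + 1 / 4 * (1 / real ((n + 1)\<^sup>2)))
      sums (pi\<^sup>2 / 6)"
    by (simp only:)
  from sums_diff[OF this sums_mult[OF inverse_squares_sums, of "1 / 4"]] show ?thesis
    by simp
qed

lemma sums_add_telescoping:
  fixes f g h :: "nat \<Rightarrow> 'a::real_normed_field"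
  assumes "f sums s" and "h \<longlonglongrightarrow> l" and "\<And>n. g n = c * f n + (h (Suc n) - h n)"
  shows "g sums (c * s + (l - h 0))"
  unfolding assms(3) by (intro sums_add sums_mult telescope_sums assms(1,2))

definition summand :: "nat \<Rightarrow> nat \<Rightarrow> real" where
  "summand r n = central_binom n / ((2 * real n + 2 * real r + 3) * (real n + 1)
     * (2 * real n + 1) * (2 * real n + 3) * central_binom (n + r + 1))"

lemma summand_Suc_index:
  "summand r (Suc n) = (2 * real n + 1)\<^sup>2 * (real n + real r + 2)
     / ((real n + 2) * (2 * real n + 5) * (2 * real n + 2 * real r + 5)) * summand r n"
proof -
  have index: "Suc n + r + 1 = Suc (n + r + 1)"
    by simp
  show ?thesis
    using central_binom_pos[of n] central_binom_pos[of "n + r + 1"]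
      of_nat_0_le_iff[of n] of_nat_0_le_iff[of r]
    unfolding summand_def index central_binom_Suc
    by (simp add: divide_simps) (simp add: algebra_simps power2_eq_square)
qed

lemma summand_Suc_param:
  "summand (Suc r) n = (real n + real r + 2) / (2 * (2 * real n + 2 * real r + 5)) * summand r n"
proof -
  have index: "n + Suc r + 1 = Suc (n + r + 1)"
    by simp
  show ?thesis
    using central_binom_pos[of n] central_binom_pos[of "n + r + 1"]
      of_nat_0_le_iff[of n] of_nat_0_le_iff[of r]
    unfolding summand_def index central_binom_Suc
    by (simp add: divide_simps) (simp add: algebra_simps)
qed

definition rec_coeff :: "real \<Rightarrow> real" where
  "rec_coeff r = (2 * r + 1) * (3 * r + 5) / (8 * (r + 2) * (3 * r + 2))"

definition telescoping_cert :: "real \<Rightarrow> real \<Rightarrow> real" where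
  "telescoping_cert r n = (8 * n\<^sup>2 + 4 * (r + 3) * n - (r + 2) * (r - 1)) * (n + 1) * (2 * n + 3)
     / (8 * (r + 1) * (r + 2)\<^sup>2 * (3 * r + 2))"

lemma telescoping_cert_identity:
  fixes n r :: real
  assumes "n \<ge> 0" and "r \<ge> 0"
  shows "(n + r + 2) / (2 * (2 * n + 2 * r + 5))
    = rec_coeff r
      + telescoping_cert r (n + 1) * ((2 * n + 1)\<^sup>2 * (n + r + 2) / ((n + 2) * (2 * n + 5) * (2 * n + 2 * r + 5)))
      - telescoping_cert r n"
  using assms unfolding rec_coeff_def telescoping_cert_def
  by (simp add: divide_simps) (simp add: algebra_simps power2_eq_square)

definition telescoping_term :: "nat \<Rightarrow> nat \<Rightarrow> real" where
  "telescoping_term r n = telescoping_cert (real r) (real n) * summand r n"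

lemma summand_Suc_param_telescoping:
  "summand (Suc r) n
     = rec_coeff (real r) * summand r n + (telescoping_term r (Suc n) - telescoping_term r n)"
  unfolding summand_Suc_param telescoping_term_def summand_Suc_index of_nat_Suc
  by (subst telescoping_cert_identity) (simp_all add: algebra_simps)

lemma telescoping_term_tendsto:
  "telescoping_term r
     \<longlonglongrightarrow> 1 / (4 ^ (r + 2) * ((real r + 1) * (real r + 2)\<^sup>2 * (3 * real r + 2)))"
proof -
  define d where "d = (real r + 1) * (real r + 2)\<^sup>2 * (3 * real r + 2)"
  have "d > 0"
    by (simp add: d_def)
  have denom: "8 * (real r + 1) * (real r + 2)\<^sup>2 * (3 * real r + 2) = 8 * d"
    by (simp add: d_def)
  have "(\<lambda>n. telescoping_cert (real r) (real n)
      / ((2 * real n + 2 * real r + 3) * (real n + 1) * (2 * real n + 1) * (2 * real n + 3)))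
      \<longlonglongrightarrow> inverse d / 4" (is "?cert \<longlonglongrightarrow> _")
    unfolding telescoping_cert_def denom using \<open>d > 0\<close> by real_asymp
  note cert_tendsto = this
  have split: "?cert n * (central_binom n / central_binom (n + (r + 1))) = telescoping_term r n" for n
    unfolding telescoping_term_def summand_def by (simp add: add.assoc)
  from tendsto_mult[OF cert_tendsto central_binom_ratio_tendsto[of "r + 1"]]
  have "telescoping_term r \<longlonglongrightarrow> inverse d / 4 * (1 / 4 ^ (r + 1))"
    unfolding split .
  then show ?thesis
    by (simp add: d_def field_simps)
qed

definition wp_part :: "nat \<Rightarrow> real" where
  "wp_part r = 1 / 2 ^ (2 * r + 1)
     * (3 / (8 * (real r + 1)) + (4 * wp (2 * r + 2) + 2 * wp (2 * r)) / 8)"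

definition binom_part :: "nat \<Rightarrow> real" where
  "binom_part r = 1 / (3 * (2 * real r + 3) * central_binom (r + 1))
     + 1 / (2 * (2 * real r + 1) * central_binom r)"

lemma wp_part_Suc:
  "wp_part (Suc r) = rec_coeff (real r) * wp_part r
     + 1 / (4 ^ (r + 2) * ((real r + 1) * (real r + 2)\<^sup>2 * (3 * real r + 2)))"
proof -
  define y w p where "y = real r" and "w = wp (2 * r)" and "p = (4::real) ^ r"
  have "y \<ge> 0" "p > 0"
    by (simp_all add: y_def p_def)
  have w2: "wp (2 * r + 2) = ((2 * y + 1) * w + 1 / (2 * y + 2)) / (2 * y + 2)"
    using wp_Suc_Suc[of "2 * r"] by (simp add: y_def w_def)
  have w4: "wp (2 * r + 4) = ((2 * y + 3) * wp (2 * r + 2) + 1 / (2 * y + 4)) / (2 * y + 4)"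
    using wp_Suc_Suc[of "2 * r + 2"] by (simp add: y_def eval_nat_numeral algebra_simps)
  have powers: "(2::real) ^ (2 * Suc r + 1) = 8 * p" "(2::real) ^ (2 * r + 1) = 2 * p"
      "(4::real) ^ (r + 2) = 16 * p"
    by (simp_all add: p_def power_add power_mult)
  have indices: "2 * Suc r + 2 = 2 * r + 4" "2 * Suc r = 2 * r + 2"
    by simp_all
  show ?thesis
    unfolding wp_part_def powers indices(1)
    unfolding indices(2) w4 w2 w_def[symmetric] rec_coeff_def of_nat_Suc y_def[symmetric]
    using \<open>y \<ge> 0\<close> \<open>p > 0\<close>
    by (simp add: divide_simps) (simp add: algebra_simps power2_eq_square)
qed

lemma binom_part_Suc: "binom_part (Suc r) = rec_coeff (real r) * binom_part r + telescoping_term r 1"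
proof -
  define y c where "y = real r" and "c = central_binom r"
  have "y \<ge> 0" "c > 0"
    by (simp_all add: y_def c_def central_binom_pos)
  have c1: "central_binom (Suc r) = 2 * (2 * y + 1) / (y + 1) * c"
    by (simp add: central_binom_Suc y_def c_def)
  have c2: "central_binom (Suc (Suc r)) = 2 * (2 * y + 3) / (y + 2) * central_binom (Suc r)"
    by (simp add: central_binom_Suc y_def algebra_simps)
  have "central_binom 1 = 2"
    by (simp add: central_binom_def)
  then have g1: "telescoping_term r 1
      = telescoping_cert y 1 * (2 / ((2 * y + 5) * 30 * central_binom (Suc (Suc r))))"
    by (simp add: telescoping_term_def summand_def y_def algebra_simps)
  show ?thesis
    unfolding binom_part_def g1 telescoping_cert_def rec_coeff_def Suc_eq_plus1[symmetric] c2 c1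
      of_nat_Suc y_def[symmetric] c_def[symmetric]
    using \<open>y \<ge> 0\<close> \<open>c > 0\<close>
    by (simp add: divide_simps) (simp add: algebra_simps power2_eq_square)
qed

lemma summand_0_partial_fractions:
  "summand 0 n = (1 / (2 * real n + 1)\<^sup>2 + 1 / (2 * real n + 3)\<^sup>2
     + (1 / (2 * real n + 3) - 1 / (2 * real n + 1))) / 8"
  using central_binom_pos[of n]
  unfolding summand_def Suc_eq_plus1[symmetric] central_binom_Suc
  by (simp add: divide_simps) (simp add: algebra_simps power2_eq_square)

lemma sums_summand_0: "(\<lambda>m. summand 0 (Suc m)) sums (wp_part 0 - binom_part 0)"
proof -
  define f g where "f = (\<lambda>n. 1 / (2 * real n + 1)\<^sup>2)" and "g = (\<lambda>n. 1 / (2 * real n + 1))"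
  have f1: "(\<lambda>m. f (Suc m)) sums (pi\<^sup>2 / 8 - 1)"
    using sums_inverse_odd_squares by (subst sums_Suc_iff) (simp add: f_def)
  have f2: "(\<lambda>m. f (Suc (Suc m))) sums (pi\<^sup>2 / 8 - 1 - 1 / 9)"
    using f1 by (subst sums_Suc_iff[where f = "\<lambda>m. f (Suc m)"]) (simp add: f_def)
  have "(\<lambda>m. g (Suc m)) \<longlonglongrightarrow> 0"
    unfolding g_def by real_asymp
  then have g: "(\<lambda>m. g (Suc (Suc m)) - g (Suc m)) sums (0 - 1 / 3)"
    using telescope_sums by (force simp: g_def)
  have split: "(f (Suc m) + f (Suc (Suc m)) + (g (Suc (Suc m)) - g (Suc m))) / 8 = summand 0 (Suc m)"
    for m
    by (simp add: summand_0_partial_fractions f_def g_def algebra_simps)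
  from sums_divide[OF sums_add[OF sums_add[OF f1 f2] g], of 8]
  have "(\<lambda>m. summand 0 (Suc m)) sums ((pi\<^sup>2 / 8 - 1 + (pi\<^sup>2 / 8 - 1 - 1 / 9) + (0 - 1 / 3)) / 8)"
    unfolding split .
  moreover have "wp_part 0 - binom_part 0 = (pi\<^sup>2 / 8 - 1 + (pi\<^sup>2 / 8 - 1 - 1 / 9) + (0 - 1 / 3)) / 8"
    using wp_Suc_Suc[of 0] by (simp add: wp_part_def binom_part_def central_binom_def wp_0 field_simps)
  ultimately show ?thesis
    by (simp only:)
qed

lemma sums_summand: "(\<lambda>m. summand r (Suc m)) sums (wp_part r - binom_part r)"
proof (induction r)
  case 0
  show ?case
    by (rule sums_summand_0)
next
  case (Suc r)
  have "(\<lambda>m. summand (Suc r) (Suc m)) sums (rec_coeff (real r) * (wp_part r - binom_part r)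
      + (1 / (4 ^ (r + 2) * ((real r + 1) * (real r + 2)\<^sup>2 * (3 * real r + 2))) - telescoping_term r (Suc 0)))"
    using summand_Suc_param_telescoping
    by (intro sums_add_telescoping[OF Suc.IH LIMSEQ_Suc[OF telescoping_term_tendsto]])
  then show ?case
    by (simp add: wp_part_Suc binom_part_Suc algebra_simps)
qed

theorem theorem5p0p4:
  fixes r :: nat
  shows "(\<lambda>m. let n = Suc m in
            1 / ((2 * real n + 2 * real r + 3) * (real n + 1) * (2 * real n + 1) * (2 * real n + 3))
            * (real ((2*n) choose n) / real ((2*n + 2*r + 2) choose (n + r + 1))))
         sums
          (1 / 2 ^ (2*r + 1) * (3 / (8 * (real r + 1)) + (4 * wp (2*r + 2) + 2 * wp (2*r)) / 8)
           - 1 / (3 * (2 * real r + 3) * real ((2*r + 2) choose (r + 1)))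
           - 1 / (2 * (2 * real r + 1) * real ((2*r) choose r)))"
proof -
  have "2 * (n + r + 1) = 2 * n + 2 * r + 2" for n
    by simp
  then have terms: "summand r n = 1 / ((2 * real n + 2 * real r + 3) * (real n + 1) * (2 * real n + 1) * (2 * real n + 3))
      * (real ((2*n) choose n) / real ((2*n + 2*r + 2) choose (n + r + 1)))" for n
    unfolding summand_def central_binom_def by simp
  have "2 * (r + 1) = 2 * r + 2"
    by simp
  then have closed_form: "wp_part r - binom_part r
      = 1 / 2 ^ (2*r + 1) * (3 / (8 * (real r + 1)) + (4 * wp (2*r + 2) + 2 * wp (2*r)) / 8)
        - 1 / (3 * (2 * real r + 3) * real ((2*r + 2) choose (r + 1)))
        - 1 / (2 * (2 * real r + 1) * real ((2*r) choose r))"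
    unfolding wp_part_def binom_part_def central_binom_def by simp
  show ?thesis
    using sums_summand[of r] unfolding terms closed_form by (simp add: Let_def)
qed

end
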